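(* Suppose the dynamic deficiency of the network is $1$ and that the network has a positive steady state $x^*\in\mathbb{R}_{>0}^n$. Let $C_1,\dots,C_k$ (after reordering) be the complexes that do not lie in any terminal strongly connected component of $G$, and let $\chi\in\ker M\setminus\ker\mathcal{L}(G)$. Then $\chi_i\neq0$ for $1\le i\le k$, and for every steady state $x$ and every $2\le i\le k$, \[x^{C_i}=\frac{\chi_i}{\chi_1}\,x^{C_1},\] each of these being a type 1 complex-linear invariant on $C_1,\dots,C_k$.
   Context: Setup: species $S_1,\dots,S_n$, concentrations $x$, complexes $C_1,\dots,C_m\in\mathbb{Z}_{\ge0}^n$, reaction graph $G$ on complexes with positive edge labels $\kappa_{ij}$. Laplacian $\mathcal{L}(G)$: $\mathcal{L}(G)_{ji}=\kappa_{ij}$ for edges $C_i\to C_j$, other off-diagonal entries $0$, $\mathcal{L}(G)_{ii}=-\sum_j\kappa_{ij}$. $Y$ is the $n\times m$ matrix with columns $C_i$; $x^C=\prod_jx_j^{C(S_j)}$, $\Psi(x)=(x^{C_1},\dots,x^{C_m})^\top$; dynamics $dx/dt=Y\mathcal{L}(G)\Psi(x)$; $M=Y\mathcal{L}(G)$; steady state means $M\Psi(x)=0$. A strongly connected component of $G$ is a maximal subgraph in which any two nodes are joined by directed paths in both directions; it is terminal if no edge leaves it. $\ker\mathcal{L}(G)$ is spanned by vectors each supported on the nodes of a single terminal strongly connected component. The dynamic deficiency is $\delta_D=\dim\ker M-\dim\ker\mathcal{L}(G)$. A type 1 complex-linear invariant on $C_1,\dots,C_k$ is a polynomial $a_1x^{C_1}+\dots+a_kx^{C_k}$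 with $(a_1,\dots,a_k,0,\dots,0)$ in the row span of $M$. *)

theory Defs
  imports "HOL-Analysis.Analysis"
begin

(* Species are indexed by a finite type 's, complexes by a finite type 'c.
   A complex is  C :: 'c => 's => nat  (C i j = coefficient of species j in complex i). *)

definition edges :: "('c \<Rightarrow> 'c \<Rightarrow> real) \<Rightarrow> ('c \<times> 'c) set" where
  "edges \<kappa> = {(i, j). \<kappa> i j > 0}"

definition strongly_connected_set :: "('c \<Rightarrow> 'c \<Rightarrow> real) \<Rightarrow> 'c set \<Rightarrow> bool" where
  "strongly_connected_set \<kappa> S \<longleftrightarrow>
     (\<forall>a\<in>S. \<forall>b\<in>S. (a, b) \<in> (edges \<kappa>)\<^sup>* \<and> (b, a) \<in> (edges \<kappa>)\<^sup>*)"

definition scc :: "('c \<Rightarrow> 'c \<Rightarrow> real) \<Rightarrow> 'c set \<Rightarrow> bool" where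
  "scc \<kappa> S \<longleftrightarrow> S \<noteq> {} \<and> strongly_connected_set \<kappa> S \<and>
     (\<forall>T. strongly_connected_set \<kappa> T \<and> S \<subseteq> T \<longrightarrow> T = S)"

definition terminal_scc :: "('c \<Rightarrow> 'c \<Rightarrow> real) \<Rightarrow> 'c set \<Rightarrow> bool" where
  "terminal_scc \<kappa> S \<longleftrightarrow> scc \<kappa> S \<and> (\<forall>a\<in>S. \<forall>b. (a, b) \<in> edges \<kappa> \<longrightarrow> b \<in> S)"

definition non_terminal_complexes :: "('c \<Rightarrow> 'c \<Rightarrow> real) \<Rightarrow> 'c set" where
  "non_terminal_complexes \<kappa> = {i. \<not> (\<exists>S. terminal_scc \<kappa> S \<and> i \<in> S)}"

definition laplacian :: "('c::finite \<Rightarrow> 'c \<Rightarrow> real) \<Rightarrow> real^'c^'c" where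
  "laplacian \<kappa> = (\<chi> j i. if i = j then - (\<Sum>l\<in>UNIV. \<kappa> i l) else \<kappa> i j)"

definition Ymat :: "('c::finite \<Rightarrow> 's::finite \<Rightarrow> nat) \<Rightarrow> real^'c^'s" where
  "Ymat C = (\<chi> s i. real (C i s))"

definition Mmat :: "('c::finite \<Rightarrow> 's::finite \<Rightarrow> nat) \<Rightarrow> ('c \<Rightarrow> 'c \<Rightarrow> real) \<Rightarrow> real^'c^'s" where
  "Mmat C \<kappa> = Ymat C ** laplacian \<kappa>"

definition monom :: "real^'s::finite \<Rightarrow> ('s \<Rightarrow> nat) \<Rightarrow> real" where
  "monom x c = (\<Prod>j\<in>UNIV. (x $ j) ^ c j)"

definition Psi :: "('c::finite \<Rightarrow> 's::finite \<Rightarrow> nat) \<Rightarrow> real^'s \<Rightarrow> real^'c" where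
  "Psi C x = (\<chi> i. monom x (C i))"

definition steady_state :: "('c::finite \<Rightarrow> 's::finite \<Rightarrow> nat) \<Rightarrow> ('c \<Rightarrow> 'c \<Rightarrow> real) \<Rightarrow> real^'s \<Rightarrow> bool" where
  "steady_state C \<kappa> x \<longleftrightarrow> Mmat C \<kappa> *v Psi C x = 0"

definition mat_ker :: "real^'a::finite^'b::finite \<Rightarrow> (real^'a) set" where
  "mat_ker A = {v. A *v v = 0}"

definition dynamic_deficiency :: "('c::finite \<Rightarrow> 's::finite \<Rightarrow> nat) \<Rightarrow> ('c \<Rightarrow> 'c \<Rightarrow> real) \<Rightarrow> int" where
  "dynamic_deficiency C \<kappa> = int (dim (mat_ker (Mmat C \<kappa>))) - int (dim (mat_ker (laplacian \<kappa>)))"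

(* a type 1 complex-linear invariant on the complexes in N, with coefficient vector a:
   a is supported on N and lies in the row span of M *)
definition type1_invariant :: "real^'c::finite^'s::finite \<Rightarrow> 'c set \<Rightarrow> real^'c \<Rightarrow> bool" where
  "type1_invariant M N a \<longleftrightarrow> (\<forall>j. j \<notin> N \<longrightarrow> a $ j = 0) \<and> a \<in> span (rows M)"

end

theory Submission imports Defs begin

(* Write T for the set of complexes lying in no terminal strongly connected component.
   The proof has three ingredients.
   (1) Graph theory: every kernel vector of the Laplacian vanishes on T.  Balancing the
       absolute values of such a vector over T shows that its support inside T is closed
       under edges; a nonempty edge-closed set contains a node of a terminal component,
       which is impossible inside T.
   (2) Linear algebra: ker L is contained in ker M with codimension one, so
       ker M = ker L + R chi; combined with (1), every w in ker M restricted to T is a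
       multiple of chi restricted to T.  Moreover a vector orthogonal to ker M lies in the
       row span of M.
   (3) Applying (2) to Psi(x) for a steady state x gives Psi(x)|_T = c chi|_T; a positive
       steady state has all monomials positive, hence chi is nonzero on T, and the ratio
       identities and the row-span membership of the two-point coefficient vectors follow. *)


section \<open>Terminal strongly connected components\<close>

definition reach :: "('c \<Rightarrow> 'c \<Rightarrow> real) \<Rightarrow> 'c \<Rightarrow> 'c set" where
  "reach \<kappa> a = {b. (a, b) \<in> (edges \<kappa>)\<^sup>*}"

(* A node whose reachable set is minimal in size generates a terminal component:
   everything reachable from it can reach it back. *)
lemma terminal_scc_reach_if_minimal:
  fixes \<kappa> :: "'c::finite \<Rightarrow> 'c \<Rightarrow> real"
  assumes minimal: "\<And>b. b \<in> reach \<kappa> a \<Longrightarrow> card (reach \<kappa> a) \<le> card (reach \<kappa> b)"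
  shows "terminal_scc \<kappa> (reach \<kappa> a)"
proof -
  have returns: "(b, a) \<in> (edges \<kappa>)\<^sup>*" if b: "b \<in> reach \<kappa> a" for b
  proof -
    have "reach \<kappa> b \<subseteq> reach \<kappa> a" using b by (auto simp: reach_def)
    with minimal[OF b] have "reach \<kappa> b = reach \<kappa> a" by (simp add: card_seteq)
    then have "a \<in> reach \<kappa> b" by (simp add: reach_def)
    then show ?thesis by (simp add: reach_def)
  qed
  have sc: "strongly_connected_set \<kappa> (reach \<kappa> a)"
    unfolding strongly_connected_set_def
    using returns by (auto simp: reach_def intro: rtrancl_trans)
  show ?thesis
    unfolding terminal_scc_def scc_def
  proof (intro conjI allI impI ballI sc)
    show "reach \<kappa> a \<noteq> {}" by (auto simp: reach_def)
    fix T assume "strongly_connected_set \<kappa> T \<and> reach \<kappa> a \<subseteq> T"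
    then show "T = reach \<kappa> a" unfolding strongly_connected_set_def by (auto simp: reach_def)
  next
    fix b c assume "b \<in> reach \<kappa> a" "(b, c) \<in> edges \<kappa>"
    then show "c \<in> reach \<kappa> a" by (auto simp: reach_def)
  qed
qed

lemma edge_closed_set_meets_terminal_scc:
  fixes \<kappa> :: "'c::finite \<Rightarrow> 'c \<Rightarrow> real"
  assumes "a0 \<in> S" and closed: "\<And>a b. a \<in> S \<Longrightarrow> (a, b) \<in> edges \<kappa> \<Longrightarrow> b \<in> S"
  shows "\<exists>a\<in>S. \<exists>R. terminal_scc \<kappa> R \<and> a \<in> R"
proof -
  obtain a where aS: "a \<in> S" and least: "\<And>b. b \<in> S \<Longrightarrow> card (reach \<kappa> a) \<le> card (reach \<kappa> b)"
    using ex_has_least_nat[of "\<lambda>x. x \<in> S" a0 "\<lambda>x. card (reach \<kappa> x)"] \<open>a0 \<in> S\<close> by blast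
  have "reach \<kappa> a \<subseteq> S"
  proof
    fix b assume "b \<in> reach \<kappa> a"
    then have "(a, b) \<in> (edges \<kappa>)\<^sup>*" by (simp add: reach_def)
    then show "b \<in> S" by (induction rule: rtrancl_induct) (use aS closed in auto)
  qed
  with least have "terminal_scc \<kappa> (reach \<kappa> a)" by (blast intro: terminal_scc_reach_if_minimal)
  moreover have "a \<in> reach \<kappa> a" by (simp add: reach_def)
  ultimately show ?thesis using aS by blast
qed

lemma no_edge_into_non_terminal:
  assumes nonneg: "\<forall>i j. \<kappa> i j \<ge> 0"
    and "i \<notin> non_terminal_complexes \<kappa>" and "j \<in> non_terminal_complexes \<kappa>"
  shows "\<kappa> i j = 0"
proof (rule ccontr)
  assume "\<kappa> i j \<noteq> 0"
  then have edge: "(i, j) \<in> edges \<kappa>" using nonneg by (auto simp: edges_def order_less_le)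
  obtain S where S: "terminal_scc \<kappa> S" "i \<in> S"
    using assms(2) by (auto simp: non_terminal_complexes_def)
  then have "j \<in> S" using edge by (auto simp: terminal_scc_def)
  with S assms(3) show False by (auto simp: non_terminal_complexes_def)
qed


section \<open>The kernel of the Laplacian\<close>

lemma laplacian_mult_component:
  fixes \<kappa> :: "'c::finite \<Rightarrow> 'c \<Rightarrow> real"
  assumes no_loops: "\<forall>i. \<kappa> i i = 0"
  shows "(laplacian \<kappa> *v v) $ j = (\<Sum>i\<in>UNIV. \<kappa> i j * v $ i) - (\<Sum>l\<in>UNIV. \<kappa> j l) * v $ j"
proof -
  have "(laplacian \<kappa> *v v) $ j
      = (\<Sum>i\<in>UNIV. (if i = j then - (\<Sum>l\<in>UNIV. \<kappa> i l) else \<kappa> i j) * v $ i)"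
    by (simp add: laplacian_def matrix_vector_mult_def)
  also have "\<dots> = (\<Sum>i\<in>UNIV. (if i = j then - (\<Sum>l\<in>UNIV. \<kappa> j l) * v $ j else 0) + \<kappa> i j * v $ i)"
    by (rule sum.cong) (auto simp: no_loops)
  also have "\<dots> = (\<Sum>i\<in>UNIV. \<kappa> i j * v $ i) - (\<Sum>l\<in>UNIV. \<kappa> j l) * v $ j"
    by (simp add: sum.distrib)
  finally show ?thesis .
qed

lemma laplacian_kernel_inflow:
  fixes \<kappa> :: "'c::finite \<Rightarrow> 'c \<Rightarrow> real"
  assumes nonneg: "\<forall>i j. \<kappa> i j \<ge> 0" and no_loops: "\<forall>i. \<kappa> i i = 0"
    and ker: "laplacian \<kappa> *v v = 0" and j: "j \<in> non_terminal_complexes \<kappa>"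
  shows "(\<Sum>l\<in>UNIV. \<kappa> j l) * v $ j = (\<Sum>i\<in>non_terminal_complexes \<kappa>. \<kappa> i j * v $ i)"
proof -
  have "(\<Sum>i\<in>UNIV. \<kappa> i j * v $ i) = (\<Sum>i\<in>non_terminal_complexes \<kappa>. \<kappa> i j * v $ i)"
    by (rule sum.mono_neutral_right) (use j no_edge_into_non_terminal[where \<kappa>=\<kappa>, OF nonneg] in auto)
  then show ?thesis using laplacian_mult_component[where \<kappa>=\<kappa>, OF no_loops, of v j] ker by simp
qed

(* Balance of |v| over the non-terminal complexes T for v in ker L: the in/out inequalities
   for |v| sum to an equality, so each holds with equality. *)
lemma laplacian_kernel_abs_balance:
  fixes \<kappa> :: "'c::finite \<Rightarrow> 'c \<Rightarrow> real"
  defines "T \<equiv> non_terminal_complexes \<kappa>"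
  assumes nonneg: "\<forall>i j. \<kappa> i j \<ge> 0" and no_loops: "\<forall>i. \<kappa> i i = 0"
    and ker: "laplacian \<kappa> *v v = 0"
  shows "\<And>i. i \<in> T \<Longrightarrow> v $ i \<noteq> 0 \<Longrightarrow> (\<Sum>l\<in>T. \<kappa> i l) = (\<Sum>l\<in>UNIV. \<kappa> i l)"
    and "\<And>j. j \<in> T \<Longrightarrow> (\<Sum>i\<in>T. \<kappa> i j * \<bar>v $ i\<bar>) = (\<Sum>l\<in>UNIV. \<kappa> j l) * \<bar>v $ j\<bar>"
proof -
  define out where "out j = (\<Sum>l\<in>UNIV. \<kappa> j l)" for j
  have in_ge_out: "out j * \<bar>v $ j\<bar> \<le> (\<Sum>i\<in>T. \<kappa> i j * \<bar>v $ i\<bar>)" if "j \<in> T" for j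
  proof -
    have "out j \<ge> 0" using nonneg by (simp add: out_def sum_nonneg)
    then have "out j * \<bar>v $ j\<bar> = \<bar>out j * v $ j\<bar>" by (simp add: abs_mult)
    also have "\<dots> = \<bar>\<Sum>i\<in>T. \<kappa> i j * v $ i\<bar>"
      using laplacian_kernel_inflow[where \<kappa>=\<kappa>, OF nonneg no_loops ker that[unfolded T_def]]
      by (simp only: out_def T_def)
    also have "\<dots> \<le> (\<Sum>i\<in>T. \<kappa> i j * \<bar>v $ i\<bar>)"
      using sum_abs[of "\<lambda>i. \<kappa> i j * v $ i" T] nonneg by (simp add: abs_mult)
    finally show ?thesis .
  qed
  have out_T_le: "(\<Sum>l\<in>T. \<kappa> i l) \<le> out i" for i
    unfolding out_def by (rule sum_mono2) (use nonneg in auto)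
  have total_in: "(\<Sum>j\<in>T. \<Sum>i\<in>T. \<kappa> i j * \<bar>v $ i\<bar>) = (\<Sum>i\<in>T. \<bar>v $ i\<bar> * (\<Sum>j\<in>T. \<kappa> i j))"
    by (subst sum.swap) (simp add: sum_distrib_left mult.commute)
  have total_in_le: "(\<Sum>i\<in>T. \<bar>v $ i\<bar> * (\<Sum>j\<in>T. \<kappa> i j)) \<le> (\<Sum>j\<in>T. out j * \<bar>v $ j\<bar>)"
    by (rule sum_mono) (metis out_T_le abs_ge_zero mult.commute mult_left_mono)
  have total_out_le: "(\<Sum>j\<in>T. out j * \<bar>v $ j\<bar>) \<le> (\<Sum>j\<in>T. \<Sum>i\<in>T. \<kappa> i j * \<bar>v $ i\<bar>)"
    by (rule sum_mono) (rule in_ge_out)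
  have out_slack: "(\<Sum>i\<in>T. \<bar>v $ i\<bar> * (out i - (\<Sum>j\<in>T. \<kappa> i j))) = 0"
    using total_in total_in_le total_out_le
    by (simp add: right_diff_distrib sum_subtractf mult.commute)
  have "\<forall>i\<in>T. \<bar>v $ i\<bar> * (out i - (\<Sum>j\<in>T. \<kappa> i j)) = 0"
    using sum_nonneg_eq_0_iff[of T "\<lambda>i. \<bar>v $ i\<bar> * (out i - (\<Sum>j\<in>T. \<kappa> i j))"]
      out_slack out_T_le by simp
  then show "\<And>i. i \<in> T \<Longrightarrow> v $ i \<noteq> 0 \<Longrightarrow> (\<Sum>l\<in>T. \<kappa> i l) = (\<Sum>l\<in>UNIV. \<kappa> i l)"
    by (force simp: out_def)
  have in_slack: "(\<Sum>j\<in>T. (\<Sum>i\<in>T. \<kappa> i j * \<bar>v $ i\<bar>) - out j * \<bar>v $ j\<bar>) = 0"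
    using total_in total_in_le total_out_le by (simp add: sum_subtractf)
  have "\<forall>j\<in>T. (\<Sum>i\<in>T. \<kappa> i j * \<bar>v $ i\<bar>) - out j * \<bar>v $ j\<bar> = 0"
    using sum_nonneg_eq_0_iff[of T "\<lambda>j. (\<Sum>i\<in>T. \<kappa> i j * \<bar>v $ i\<bar>) - out j * \<bar>v $ j\<bar>"]
      in_slack in_ge_out by simp
  then show "\<And>j. j \<in> T \<Longrightarrow> (\<Sum>i\<in>T. \<kappa> i j * \<bar>v $ i\<bar>) = (\<Sum>l\<in>UNIV. \<kappa> j l) * \<bar>v $ j\<bar>"
    by (simp add: out_def)
qed

lemma laplacian_kernel_support_edge_closed:
  fixes \<kappa> :: "'c::finite \<Rightarrow> 'c \<Rightarrow> real"
  defines "T \<equiv> non_terminal_complexes \<kappa>"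
  assumes nonneg: "\<forall>i j. \<kappa> i j \<ge> 0" and no_loops: "\<forall>i. \<kappa> i i = 0"
    and ker: "laplacian \<kappa> *v v = 0"
    and a: "a \<in> T" "v $ a \<noteq> 0" and edge: "(a, b) \<in> edges \<kappa>"
  shows "b \<in> T \<and> v $ b \<noteq> 0"
proof
  note balance = laplacian_kernel_abs_balance[where \<kappa>=\<kappa>, OF nonneg no_loops ker, folded T_def]
  have ab: "\<kappa> a b > 0" using edge by (simp add: edges_def)
  have "(\<Sum>l\<in>UNIV - T. \<kappa> a l) = 0"
    using balance(1)[OF a] sum.subset_diff[of T UNIV "\<kappa> a"] by simp
  then have "\<forall>l\<in>UNIV - T. \<kappa> a l = 0"
    using sum_nonneg_eq_0_iff[of "UNIV - T" "\<kappa> a"] nonneg by auto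
  with ab show bT: "b \<in> T" by (metis DiffI UNIV_I less_irrefl)
  show "v $ b \<noteq> 0"
  proof
    assume "v $ b = 0"
    then have "(\<Sum>i\<in>T. \<kappa> i b * \<bar>v $ i\<bar>) = 0" using balance(2)[OF bT] by simp
    then have "\<forall>i\<in>T. \<kappa> i b * \<bar>v $ i\<bar> = 0"
      using sum_nonneg_eq_0_iff[of T "\<lambda>i. \<kappa> i b * \<bar>v $ i\<bar>"] nonneg by auto
    with a ab show False by auto
  qed
qed

lemma laplacian_kernel_vanishes_on_non_terminal:
  fixes \<kappa> :: "'c::finite \<Rightarrow> 'c \<Rightarrow> real"
  assumes nonneg: "\<forall>i j. \<kappa> i j \<ge> 0" and no_loops: "\<forall>i. \<kappa> i i = 0"
    and ker: "laplacian \<kappa> *v v = 0" and i: "i \<in> non_terminal_complexes \<kappa>"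
  shows "v $ i = 0"
proof (rule ccontr)
  assume "v $ i \<noteq> 0"
  define S where "S = {a \<in> non_terminal_complexes \<kappa>. v $ a \<noteq> 0}"
  have "i \<in> S" using i \<open>v $ i \<noteq> 0\<close> by (simp add: S_def)
  moreover have "b \<in> S" if "a \<in> S" "(a, b) \<in> edges \<kappa>" for a b
    using laplacian_kernel_support_edge_closed[where \<kappa>=\<kappa>, OF nonneg no_loops ker] that
    unfolding S_def by blast
  ultimately obtain a R where "a \<in> S" "terminal_scc \<kappa> R" "a \<in> R"
    using edge_closed_set_meets_terminal_scc[of i S \<kappa>] by blast
  then show False by (auto simp: S_def non_terminal_complexes_def)
qed


section \<open>Linear algebra\<close>

lemma subspace_mat_ker: "subspace (mat_ker (A::real^'a::finite^'b::finite))"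
  unfolding subspace_def mat_ker_def
  by (auto simp: matrix_vector_right_distrib matrix_vector_mult_scaleR)

lemma mat_ker_laplacian_subset_mat_ker_M: "mat_ker (laplacian \<kappa>) \<subseteq> mat_ker (Mmat C \<kappa>)"
  by (auto simp: mat_ker_def Mmat_def matrix_vector_mul_assoc[symmetric])

lemma codimension_one_decomposition:
  fixes K V :: "'a::euclidean_space set"
  assumes "subspace K" "subspace V" "K \<subseteq> V" "dim V = dim K + 1"
    and "u \<in> V" "u \<notin> K" and "w \<in> V"
  shows "\<exists>c. w - c *\<^sub>R u \<in> K"
proof -
  have "u \<notin> span K" using assms(1,6) by (metis span_eq_iff)
  then have "dim (insert u K) = dim V" using assms(4) by (simp add: dim_insert)
  then have "span (insert u K) = span V" using assms(3,5) by (intro dim_eq_span) auto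
  then have "w \<in> span (insert u K)" using assms(7) span_base by blast
  then obtain c where "w - c *\<^sub>R u \<in> span K" by (auto simp: span_breakdown_eq)
  then show ?thesis using assms(1) by (metis span_eq_iff)
qed

lemma orthogonal_to_kernel_in_row_span:
  fixes A :: "real^'a::finite^'b::finite"
  assumes "\<And>w. w \<in> mat_ker A \<Longrightarrow> inner a w = 0"
  shows "a \<in> span (rows A)"
proof -
  obtain y z where y: "y \<in> span (rows A)" and z: "\<And>w. w \<in> span (rows A) \<Longrightarrow> orthogonal z w"
    and a: "a = y + z"
    using orthogonal_subspace_decomp_exists[of "rows A" a] by blast
  have "A *v z = 0"
  proof (rule vec_eq_iff[THEN iffD2], rule allI)
    fix k
    have row_k: "row k A \<in> span (rows A)" by (auto simp: rows_def intro: span_base)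
    have "row k A = A $ k" by (simp add: row_def vec_eq_iff)
    then have "inner (A $ k) z = 0" using z[OF row_k] by (simp add: orthogonal_def inner_commute)
    then show "(A *v z) $ k = 0 $ k" by (simp add: matrix_vector_mul_component)
  qed
  then have "inner a z = 0" using assms by (simp add: mat_ker_def)
  moreover have "inner y z = 0" using z[OF y] by (simp add: orthogonal_def inner_commute)
  ultimately have "z = 0" using a by (simp add: inner_add_left)
  then show ?thesis using a y by simp
qed

lemma inner_two_point_vector:
  fixes v :: "real^'c::finite"
  assumes "i \<noteq> i1"
  shows "inner (\<chi> j. if j = i then 1 else if j = i1 then - r else 0) v = v $ i - r * v $ i1"
proof -
  have "inner (\<chi> j. if j = i then 1 else if j = i1 then - r else 0) v
      = (\<Sum>j\<in>UNIV. (if j = i then v $ i else 0) + (if j = i1 then - r * v $ i1 else 0))"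
    unfolding inner_vec_def by (rule sum.cong) (use assms in auto)
  also have "\<dots> = v $ i - r * v $ i1" by (simp add: sum.distrib)
  finally show ?thesis .
qed

lemma two_point_type1_invariant:
  fixes M :: "real^'c::finite^'s::finite"
  assumes ratio: "\<And>w. w \<in> mat_ker M \<Longrightarrow> w $ i = r * w $ i1"
    and "i \<in> N" "i1 \<in> N" "i \<noteq> i1"
  shows "type1_invariant M N (\<chi> j. if j = i then 1 else if j = i1 then - r else 0)"
  unfolding type1_invariant_def
proof (intro conjI allI impI)
  fix j assume "j \<notin> N"
  then show "(\<chi> j. if j = i then 1 else if j = i1 then - r else 0) $ j = 0"
    using assms(2,3) by auto
next
  show "(\<chi> j. if j = i then 1 else if j = i1 then - r else 0) \<in> span (rows M)"
    by (rule orthogonal_to_kernel_in_row_span)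
      (simp add: inner_two_point_vector[OF assms(4)] ratio)
qed


section \<open>Networks of dynamic deficiency one\<close>

lemma deficiency_one_kernel_proportional:
  fixes C :: "'c::finite \<Rightarrow> 's::finite \<Rightarrow> nat" and \<kappa> :: "'c \<Rightarrow> 'c \<Rightarrow> real"
  assumes nonneg: "\<forall>i j. \<kappa> i j \<ge> 0" and no_loops: "\<forall>i. \<kappa> i i = 0"
    and deficiency_one: "dynamic_deficiency C \<kappa> = 1"
    and chi_ker: "\<chi>v \<in> mat_ker (Mmat C \<kappa>)" and chi_notker: "\<chi>v \<notin> mat_ker (laplacian \<kappa>)"
    and w: "w \<in> mat_ker (Mmat C \<kappa>)"
  shows "\<exists>c. \<forall>i\<in>non_terminal_complexes \<kappa>. w $ i = c * \<chi>v $ i"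
proof -
  have "dim (mat_ker (Mmat C \<kappa>)) = dim (mat_ker (laplacian \<kappa>)) + 1"
    using deficiency_one by (simp add: dynamic_deficiency_def)
  then obtain c where "w - c *\<^sub>R \<chi>v \<in> mat_ker (laplacian \<kappa>)"
    using codimension_one_decomposition[OF subspace_mat_ker subspace_mat_ker
        mat_ker_laplacian_subset_mat_ker_M _ chi_ker chi_notker w] by blast
  then have "\<forall>i\<in>non_terminal_complexes \<kappa>. (w - c *\<^sub>R \<chi>v) $ i = 0"
    using laplacian_kernel_vanishes_on_non_terminal[OF nonneg no_loops, of "w - c *\<^sub>R \<chi>v"]
    by (simp add: mat_ker_def)
  then show ?thesis by auto
qed

lemma monom_pos:
  assumes "\<forall>j. x $ j > 0"
  shows "monom x c > 0"
  unfolding monom_def using assms by (simp add: prod_pos)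

(* Psi of a positive steady state is a kernel vector of M with no zero entry, so chi
   cannot vanish on a non-terminal complex. *)
lemma kernel_vector_nonzero_on_non_terminal:
  fixes C :: "'c::finite \<Rightarrow> 's::finite \<Rightarrow> nat" and \<kappa> :: "'c \<Rightarrow> 'c \<Rightarrow> real"
  assumes proportional: "\<And>w. w \<in> mat_ker (Mmat C \<kappa>) \<Longrightarrow>
      \<exists>c. \<forall>i\<in>non_terminal_complexes \<kappa>. w $ i = c * \<chi>v $ i"
    and pos_ss: "\<exists>xs::real^'s. (\<forall>j. xs $ j > 0) \<and> steady_state C \<kappa> xs"
    and i: "i \<in> non_terminal_complexes \<kappa>"
  shows "\<chi>v $ i \<noteq> 0"
proof
  assume "\<chi>v $ i = 0"
  obtain xs :: "real^'s" where pos: "\<forall>j. xs $ j > 0" and ss: "steady_state C \<kappa> xs"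
    using pos_ss by blast
  obtain c where "\<forall>i\<in>non_terminal_complexes \<kappa>. Psi C xs $ i = c * \<chi>v $ i"
    using proportional ss by (auto simp: steady_state_def mat_ker_def)
  with i \<open>\<chi>v $ i = 0\<close> have "monom xs (C i) = 0" by (simp add: Psi_def)
  with monom_pos[OF pos, of "C i"] show False by simp
qed


theorem mainTheorem4:
  fixes C :: "'c::finite \<Rightarrow> 's::finite \<Rightarrow> nat"
    and \<kappa> :: "'c \<Rightarrow> 'c \<Rightarrow> real"
    and \<chi>v :: "real^'c"
  assumes distinct_complexes: "inj C"
    and nonneg_labels: "\<forall>i j. \<kappa> i j \<ge> 0"
    and no_loops: "\<forall>i. \<kappa> i i = 0"
    and deficiency_one: "dynamic_deficiency C \<kappa> = 1"
    and pos_ss: "\<exists>xs::real^'s. (\<forall>j. xs $ j > 0) \<and> steady_state C \<kappa> xs"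
    and chi_ker: "\<chi>v \<in> mat_ker (Mmat C \<kappa>)"
    and chi_notker: "\<chi>v \<notin> mat_ker (laplacian \<kappa>)"
  shows "(\<forall>i\<in>non_terminal_complexes \<kappa>. \<chi>v $ i \<noteq> 0) \<and>
    (\<forall>i1\<in>non_terminal_complexes \<kappa>. \<forall>i\<in>non_terminal_complexes \<kappa>. i \<noteq> i1 \<longrightarrow>
       (\<forall>x::real^'s. (\<forall>j. x $ j \<ge> 0) \<and> steady_state C \<kappa> x \<longrightarrow>
          monom x (C i) = (\<chi>v $ i / \<chi>v $ i1) * monom x (C i1)) \<and>
       type1_invariant (Mmat C \<kappa>) (non_terminal_complexes \<kappa>)
         (\<chi> j. if j = i then 1 else if j = i1 then - (\<chi>v $ i / \<chi>v $ i1) else 0))"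
proof -
  let ?T = "non_terminal_complexes \<kappa>"
  note proportional = deficiency_one_kernel_proportional
    [where \<kappa>=\<kappa>, OF nonneg_labels no_loops deficiency_one chi_ker chi_notker]
  have nonzero: "\<chi>v $ i \<noteq> 0" if "i \<in> ?T" for i
    using kernel_vector_nonzero_on_non_terminal[OF proportional pos_ss that] .
  have ratio: "w $ i = (\<chi>v $ i / \<chi>v $ i1) * w $ i1"
    if "w \<in> mat_ker (Mmat C \<kappa>)" "i \<in> ?T" "i1 \<in> ?T" for w i i1
    using proportional[OF that(1)] that(2,3) nonzero[OF that(3)] by auto
  show ?thesis
  proof (intro conjI ballI impI allI)
    fix i assume "i \<in> ?T"
    then show "\<chi>v $ i \<noteq> 0" by (rule nonzero)
  next
    fix i1 i x assume "i1 \<in> ?T" "i \<in> ?T" "i \<noteq> i1" "(\<forall>j. 0 \<le> x $ j) \<and> steady_state C \<kappa> x"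
    then show "monom x (C i) = \<chi>v $ i / \<chi>v $ i1 * monom x (C i1)"
      using ratio[of "Psi C x" i i1] by (simp add: steady_state_def mat_ker_def Psi_def)
  next
    fix i1 i assume i1: "i1 \<in> ?T" and i: "i \<in> ?T" and "i \<noteq> i1"
    show "type1_invariant (Mmat C \<kappa>) ?T
        (\<chi> j. if j = i then 1 else if j = i1 then - (\<chi>v $ i / \<chi>v $ i1) else 0)"
      by (rule two_point_type1_invariant) (use ratio i i1 \<open>i \<noteq> i1\<close> in blast)+
  qed
qed

end
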